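(* Under the standing assumptions below, every point $u\in\mathcal P_1$ is both an R-limit and an L-limit of $\mathcal P_1$.
   Context: Fix $\rho_1,\rho_2,\rho_3\in(0,1)$ with $\rho_1+\rho_2+\rho_3>1$ and $\rho_i+\rho_j\le1$ for all $i\ne j$; $\mu_i=1$, $\theta:=\rho_1+\rho_2+\rho_3-1$. $A_i^0:=\{y\in\mathbb R^3: y_1+y_2+y_3=1, y_i=0, y_l\ge0\}$, $A^0:=\bigcup_iA_i^0$; for $z\in A^0\setminus A_j^0$, $f_j(z):=\sum_{i\neq j}\frac{(1-\rho_j)z_i+\rho_i z_j}{(1-\rho_j)+\theta z_j}e_i$. For $(\hat i,\hat j,\hat k)$ equal to $(1,2,3)$ or a cyclic permutation, $(1-x)e_{\hat j}+xe_{\hat k}\in A^0_{\hat i}$ is written $(x,\hat i)$, $\pi((x,\hat i)):=x$. Decision points $d_1,d_2,d_3\in(0,1)$ (identified with $(d_{\hat i},\hat i)$); switching rule $\mathfrak R((x,\hat i))=\hat j$ if $x<d_{\hat i}$, $\hat k$ if $x>d_{\hat i}$, both allowed if $x=d_{\hat i}$; $\varphi(z):=f_{\mathfrak R(z)}(z)$. A trajectory is $(z(t))$ with $z(t+1)\in\varphi(z(t))$; $z$ is a pre-image of $z'$ if some trajectory from $z$ has $z(t)=z'$ for some $t\ge1$. Standing assumption: $d_1$ has infinitely many distinct pre-images, while $d_2$ and $d_3$ have only finitely many. $\mathcal P_1$ is the set consisting of $d_1$ and all its pre-images. A point $u\in A^0_{\hat i}$ is an R-limit (resp. L-limit) of $\mathcal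 P_1$ if there is a sequence $u_n\in\mathcal P_1\cap A^0_{\hat i}$ with $\pi(u_n)$ strictly decreasing (resp. strictly increasing) to $\pi(u)$. *)

theory Defs
  imports Complex_Main
begin

text \<open>Points of R^3 are encoded as functions nat => real whose support lies in {1,2,3};
  coordinate l of y is y l.  Parameters rho_i and decision points d_i are nat => real,
  used only at indices 1,2,3.\<close>

definition idx :: "nat set" where "idx = {1,2,3}"

definition evec :: "nat \<Rightarrow> nat \<Rightarrow> real" where
  "evec i = (\<lambda>l. if l = i then 1 else 0)"

definition Aface :: "nat \<Rightarrow> (nat \<Rightarrow> real) set" where
  "Aface i = {y. y 1 + y 2 + y 3 = 1 \<and> y i = 0 \<and> (\<forall>l\<in>idx. y l \<ge> 0) \<and> (\<forall>l. l \<notin> idx \<longrightarrow> y l = 0)}"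

definition A0 :: "(nat \<Rightarrow> real) set" where
  "A0 = (\<Union>i\<in>idx. Aface i)"

definition theta :: "(nat \<Rightarrow> real) \<Rightarrow> real" where
  "theta rho = rho 1 + rho 2 + rho 3 - 1"

text \<open>f_j(z) (meaningful for z in A0 minus A_j^0)\<close>
definition fmap :: "(nat \<Rightarrow> real) \<Rightarrow> nat \<Rightarrow> (nat \<Rightarrow> real) \<Rightarrow> (nat \<Rightarrow> real)" where
  "fmap rho j z = (\<lambda>i. if i \<in> idx \<and> i \<noteq> j then
       ((1 - rho j) * z i + rho i * z j) / ((1 - rho j) + theta rho * z j) else 0)"

text \<open>cyclic successor on {1,2,3}: for hat i, hat j = nxt hat i, hat k = nxt (nxt hat i)\<close>
definition nxt :: "nat \<Rightarrow> nat" where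
  "nxt i = (if i = 3 then 1 else i + 1)"

definition pt :: "real \<Rightarrow> nat \<Rightarrow> (nat \<Rightarrow> real)" where
  "pt x i = (\<lambda>l. (1 - x) * evec (nxt i) l + x * evec (nxt (nxt i)) l)"

definition piF :: "nat \<Rightarrow> (nat \<Rightarrow> real) \<Rightarrow> real" where
  "piF i z = z (nxt (nxt i))"

definition allowed :: "(nat \<Rightarrow> real) \<Rightarrow> (nat \<Rightarrow> real) \<Rightarrow> nat \<Rightarrow> bool" where
  "allowed d z j \<longleftrightarrow> (\<exists>i\<in>idx. z \<in> Aface i \<and>
      ((piF i z \<le> d i \<and> j = nxt i) \<or> (piF i z \<ge> d i \<and> j = nxt (nxt i))))"

definition phi :: "(nat \<Rightarrow> real) \<Rightarrow> (nat \<Rightarrow> real) \<Rightarrow> (nat \<Rightarrow> real) \<Rightarrow> (nat \<Rightarrow> real) set" where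
  "phi rho d z = {fmap rho j z | j. allowed d z j}"

definition trajectory :: "(nat \<Rightarrow> real) \<Rightarrow> (nat \<Rightarrow> real) \<Rightarrow> (nat \<Rightarrow> (nat \<Rightarrow> real)) \<Rightarrow> bool" where
  "trajectory rho d s \<longleftrightarrow> (\<forall>t. s (Suc t) \<in> phi rho d (s t))"

definition preimage :: "(nat \<Rightarrow> real) \<Rightarrow> (nat \<Rightarrow> real) \<Rightarrow> (nat \<Rightarrow> real) \<Rightarrow> (nat \<Rightarrow> real) \<Rightarrow> bool" where
  "preimage rho d z z' \<longleftrightarrow> (\<exists>s. trajectory rho d s \<and> s 0 = z \<and> (\<exists>t\<ge>1. s t = z'))"

definition dpt :: "(nat \<Rightarrow> real) \<Rightarrow> nat \<Rightarrow> (nat \<Rightarrow> real)" where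
  "dpt d i = pt (d i) i"

definition P1 :: "(nat \<Rightarrow> real) \<Rightarrow> (nat \<Rightarrow> real) \<Rightarrow> (nat \<Rightarrow> real) set" where
  "P1 rho d = insert (dpt d 1) {z. preimage rho d z (dpt d 1)}"

definition R_limit :: "(nat \<Rightarrow> real) set \<Rightarrow> nat \<Rightarrow> (nat \<Rightarrow> real) \<Rightarrow> bool" where
  "R_limit P i u \<longleftrightarrow> u \<in> Aface i \<and> (\<exists>un. (\<forall>n. un n \<in> P \<inter> Aface i) \<and>
      (\<forall>n. piF i (un (Suc n)) < piF i (un n)) \<and> (\<lambda>n. piF i (un n)) \<longlonglongrightarrow> piF i u)"

definition L_limit :: "(nat \<Rightarrow> real) set \<Rightarrow> nat \<Rightarrow> (nat \<Rightarrow> real) \<Rightarrow> bool" where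
  "L_limit P i u \<longleftrightarrow> u \<in> Aface i \<and> (\<exists>un. (\<forall>n. un n \<in> P \<inter> Aface i) \<and>
      (\<forall>n. piF i (un (Suc n)) > piF i (un n)) \<and> (\<lambda>n. piF i (un n)) \<longlonglongrightarrow> piF i u)"

end

(* Since phi is injective, the preimages of d_1 form a single backward orbit
   c_0 = d_1, c_1, c_2, ..., which has no repetitions because there are infinitely many
   of them; P_1 is its range, and no c_n with n >= 1 is a decision point, since each of
   them has infinitely many preimages.

   In face coordinates phi acts on either side of the decision point by a decreasing
   Moebius map, and all these maps are contractions with a common factor C < 1.  If some
   c_n had an interval of length l next to it on its face containing no orbit point,
   pulling it back along the orbit would give c_(n+1) such an interval of length l / C on
   the other side, unless that interval reaches one of the breakpoints 0, 1, d_1, d_2, d_3.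
   Only finitely many orbit points border a breakpoint through an orbit-free interval, so
   from some index on the free intervals grow like l / C^k, which is impossible inside
   [0, 1].  Hence the orbit accumulates from both sides at each of its points. *)

theory Submission
  imports Defs
begin

section \<open>Faces of the simplex\<close>

lemma idx_iff: "i \<in> idx \<longleftrightarrow> i = 1 \<or> i = 2 \<or> i = 3"
  by (simp add: idx_def)

lemma nxt_simps [simp]: "nxt 1 = 2" "nxt (Suc 0) = 2" "nxt 2 = 3" "nxt 3 = 1"
  by (simp_all add: nxt_def)

lemma nxt_in_idx [simp]: "i \<in> idx \<Longrightarrow> nxt i \<in> idx"
  and nxt_nxt_nxt [simp]: "i \<in> idx \<Longrightarrow> nxt (nxt (nxt i)) = i"
  and nxt_neq [simp]: "i \<in> idx \<Longrightarrow> nxt i \<noteq> i" "i \<in> idx \<Longrightarrow> nxt (nxt i) \<noteq> i"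
    "i \<in> idx \<Longrightarrow> nxt (nxt i) \<noteq> nxt i" "i \<in> idx \<Longrightarrow> i \<noteq> nxt i"
    "i \<in> idx \<Longrightarrow> i \<noteq> nxt (nxt i)" "i \<in> idx \<Longrightarrow> nxt i \<noteq> nxt (nxt i)"
  by (auto simp: idx_iff)

lemma nxt_eq_iff [simp]: "i \<in> idx \<Longrightarrow> j \<in> idx \<Longrightarrow> nxt i = nxt j \<longleftrightarrow> i = j"
  by (auto simp: idx_iff nxt_def)

lemma idx_eq: "i \<in> idx \<Longrightarrow> idx = {i, nxt i, nxt (nxt i)}"
  by (auto simp: idx_iff nxt_def)

lemma sum_idx: "i \<in> idx \<Longrightarrow> (y :: nat \<Rightarrow> real) i + y (nxt i) + y (nxt (nxt i)) = y 1 + y 2 + y 3"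
  by (auto simp: idx_iff)

lemma pt_apply [simp]:
  "i \<in> idx \<Longrightarrow> pt x i i = 0" "i \<in> idx \<Longrightarrow> pt x i (nxt i) = 1 - x"
  "i \<in> idx \<Longrightarrow> pt x i (nxt (nxt i)) = x"
  "i \<in> idx \<Longrightarrow> l \<notin> idx \<Longrightarrow> pt x i l = 0"
  by (auto simp: idx_iff pt_def evec_def nxt_def)

lemma piF_pt [simp]: "i \<in> idx \<Longrightarrow> piF i (pt x i) = x"
  by (simp add: piF_def)

lemma pt_in_Aface: "i \<in> idx \<Longrightarrow> 0 \<le> x \<Longrightarrow> x \<le> 1 \<Longrightarrow> pt x i \<in> Aface i"
  by (auto simp: Aface_def idx_iff pt_def evec_def nxt_def)

lemma idx_fun_eqI:
  assumes "i \<in> idx" "\<forall>l. l \<notin> idx \<longrightarrow> y l = 0" "\<forall>l. l \<notin> idx \<longrightarrow> z l = 0"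
    "y i = z i" "y (nxt i) = z (nxt i)" "y (nxt (nxt i)) = z (nxt (nxt i))"
  shows "y = z"
proof
  fix l
  show "y l = z l"
    using assms idx_eq[of i] by (cases "l \<in> idx") auto
qed

lemma Aface_eq_pt:
  assumes "i \<in> idx" "z \<in> Aface i"
  shows "z = pt (piF i z) i" "0 \<le> piF i z" "piF i z \<le> 1"
proof -
  have sum: "z (nxt i) + z (nxt (nxt i)) = 1" and "z i = 0"
    using assms sum_idx[of i z] by (auto simp: Aface_def)
  then show "z = pt (piF i z) i"
    using assms by (intro idx_fun_eqI[of i]) (auto simp: Aface_def piF_def)
  have "0 \<le> z (nxt i)" "0 \<le> z (nxt (nxt i))"
    using assms by (simp_all add: Aface_def)
  then show "0 \<le> piF i z" "piF i z \<le> 1"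
    using sum by (simp_all add: piF_def)
qed

lemma pt_eq_pt_iff:
  assumes "i \<in> idx" "f \<in> idx" "0 < x" "x < 1"
  shows "pt x f = pt y i \<longleftrightarrow> i = f \<and> y = x"
proof
  assume eq: "pt x f = pt y i"
  have "i = f"
  proof (rule ccontr)
    assume "i \<noteq> f"
    then have "i = nxt f \<or> i = nxt (nxt f)"
      using assms idx_eq[of f] by auto
    then have "pt x f i \<noteq> 0"
      using assms by auto
    then show False
      using eq assms by simp
  qed
  then show "i = f \<and> y = x"
    using eq assms by (metis piF_pt)
qed simp

lemma pt_vertex: "i \<in> idx \<Longrightarrow> pt 0 i = pt 1 (nxt (nxt i))"
  by (auto simp: idx_iff nxt_def pt_def evec_def fun_eq_iff)

lemma pt_apply_rotated [simp]:
  "i \<in> idx \<Longrightarrow> pt x (nxt i) i = x" "i \<in> idx \<Longrightarrow> pt x (nxt (nxt i)) i = 1 - x"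
  "i \<in> idx \<Longrightarrow> pt x (nxt (nxt i)) (nxt i) = x"
  by (auto simp: idx_iff pt_def evec_def nxt_def)

lemma finite_idx: "finite idx"
  by (simp add: idx_def)

section \<open>Linear fractional maps\<close>

definition lin_frac :: "real \<Rightarrow> real \<Rightarrow> real \<Rightarrow> real \<Rightarrow> real" where
  "lin_frac p a q u = p * u / (a + q * u)"

lemma lin_frac_diff:
  assumes "a + q * u \<noteq> 0" "a + q * v \<noteq> 0"
  shows "lin_frac p a q u - lin_frac p a q v = p * a * (u - v) / ((a + q * u) * (a + q * v))"
  using assms by (simp add: lin_frac_def field_simps)

lemma lin_frac_strict_mono:
  assumes "0 < p" "0 < a" "0 \<le> q" "0 \<le> u" "u < v"
  shows "lin_frac p a q u < lin_frac p a q v"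
proof -
  have "0 < a + q * u" "0 < a + q * v"
    using assms by (simp_all add: add_pos_nonneg)
  then have "0 < lin_frac p a q v - lin_frac p a q u"
    using assms by (simp add: lin_frac_diff)
  then show ?thesis
    by simp
qed

lemma lin_frac_pos: "0 < p \<Longrightarrow> 0 < a \<Longrightarrow> 0 \<le> q \<Longrightarrow> 0 < u \<Longrightarrow> 0 < lin_frac p a q u"
  by (simp add: lin_frac_def add_pos_nonneg)

lemma lin_frac_less_one:
  assumes "0 < a" "0 \<le> q" "p < a + q" "0 \<le> u" "u \<le> 1"
  shows "lin_frac p a q u < 1"
proof -
  have "(p - q) * u < a"
  proof (cases "p \<le> q")
    case True
    then have "(p - q) * u \<le> 0"
      using assms by (simp add: mult_nonpos_nonneg)
    then show ?thesis
      using assms by linarith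
  next
    case False
    then have "(p - q) * u \<le> p - q"
      using assms by (simp add: mult_left_le)
    then show ?thesis
      using assms by linarith
  qed
  then show ?thesis
    using assms by (simp add: lin_frac_def add_pos_nonneg algebra_simps)
qed

lemma lin_frac_lipschitz:
  assumes "0 \<le> p" "0 < a" "0 \<le> q" "0 \<le> w" "w \<le> u" "w \<le> v"
  shows "\<bar>lin_frac p a q u - lin_frac p a q v\<bar> \<le> p * a / (a + q * w)\<^sup>2 * \<bar>u - v\<bar>"
proof -
  have w: "0 < a + q * w" and u: "a + q * w \<le> a + q * u" and v: "a + q * w \<le> a + q * v"
    using assms by (simp_all add: add_pos_nonneg mult_left_mono)
  have "\<bar>lin_frac p a q u - lin_frac p a q v\<bar> = p * a * \<bar>u - v\<bar> / ((a + q * u) * (a + q * v))"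
    using assms w u v by (simp add: lin_frac_diff abs_mult)
  also have "\<dots> \<le> p * a * \<bar>u - v\<bar> / ((a + q * w) * (a + q * w))"
    using assms w u v by (intro divide_left_mono mult_mono) auto
  finally show ?thesis
    by (simp add: power2_eq_square)
qed

lemma lin_frac_lipschitz_const_less_one:
  fixes p a q w :: real
  assumes "0 \<le> p" "p \<le> a" "0 < q" "0 < w"
  shows "p * a / (a + q * w)\<^sup>2 < 1"
proof -
  have "p * a \<le> a * a"
    using assms by (intro mult_right_mono) auto
  also have "\<dots> < (a + q * w) * (a + q * w)"
    using assms by (intro mult_strict_mono) (auto simp: add_nonneg_pos)
  finally show ?thesis
    using assms by (simp add: power2_eq_square add_nonneg_pos)
qed

section \<open>Empty intervals under decreasing contractions\<close>

lemma gap_pullback: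
  fixes g :: "real \<Rightarrow> real" and S T :: "real set"
  assumes x: "a < x" "x < b" and C: "0 < C"
    and maps: "\<And>y. y \<in> S \<Longrightarrow> a < y \<Longrightarrow> y < b \<Longrightarrow> g y \<in> T"
    and lip: "\<And>y. a < y \<Longrightarrow> y < b \<Longrightarrow> \<bar>g y - g x\<bar> \<le> C * \<bar>y - x\<bar>"
    and anti: "\<And>y z. a < y \<Longrightarrow> y < z \<Longrightarrow> z < b \<Longrightarrow> g z < g y"
  shows gap_pullback_right: "T \<inter> {g x<..<g x + l} = {} \<Longrightarrow> S \<inter> {max a (x - l / C)<..<x} = {}"
    and gap_pullback_left: "T \<inter> {g x - l<..<g x} = {} \<Longrightarrow> S \<inter> {x<..<min b (x + l / C)} = {}"
proof -
  have close: "\<bar>g y - g x\<bar> < l" if "a < y" "y < b" "\<bar>y - x\<bar> < l / C" for y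
  proof -
    have "\<bar>g y - g x\<bar> \<le> C * \<bar>y - x\<bar>"
      using lip that by simp
    also have "\<dots> < C * (l / C)"
      using C that by (intro mult_strict_left_mono) auto
    finally show ?thesis
      using C by simp
  qed
  show "S \<inter> {max a (x - l / C)<..<x} = {}" if "T \<inter> {g x<..<g x + l} = {}"
  proof (rule ccontr)
    assume "S \<inter> {max a (x - l / C)<..<x} \<noteq> {}"
    then obtain y where "y \<in> S" "a < y" "x - l / C < y" "y < x"
      by auto
    then have "g y \<in> T" "g x < g y" "\<bar>g y - g x\<bar> < l"
      using maps anti[of y x] close[of y] x by auto
    then show False
      using that by auto
  qed
  show "S \<inter> {x<..<min b (x + l / C)} = {}" if "T \<inter> {g x - l<..<g x} = {}"
  proof (rule ccontr)
    assume "S \<inter> {x<..<min b (x + l / C)} \<noteq> {}"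
    then obtain y where "y \<in> S" "x < y" "y < b" "y < x + l / C"
      by auto
    then have "g y \<in> T" "g y < g x" "\<bar>g y - g x\<bar> < l"
      using maps anti[of x y] close[of y] x by auto
    then show False
      using that by auto
  qed
qed

section \<open>One-sided limits\<close>

lemma strict_dec_seq_tendsto:
  fixes g :: "'a \<Rightarrow> real"
  assumes dense: "\<And>e. 0 < e \<Longrightarrow> \<exists>t\<in>S. a < g t \<and> g t < a + e"
  obtains \<tau> where "\<And>k. \<tau> k \<in> S" "\<And>k. g (\<tau> (Suc k)) < g (\<tau> k)"
    "(\<lambda>k. g (\<tau> k)) \<longlonglongrightarrow> a"
proof -
  let ?P = "\<lambda>k t. t \<in> S \<and> a < g t \<and> g t < a + inverse (real (Suc k))"
  have "\<exists>\<tau>. \<forall>k. ?P k (\<tau> k) \<and> g (\<tau> (Suc k)) < g (\<tau> k)"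
  proof (rule dependent_nat_choice)
    show "\<exists>t. ?P 0 t"
      using dense[of 1] by auto
    fix t k
    assume "?P k t"
    then show "\<exists>t'. ?P (Suc k) t' \<and> g t' < g t"
      using dense[of "min (g t - a) (inverse (real (Suc (Suc k))))"] by auto
  qed
  then obtain \<tau> where \<tau>: "\<And>k. ?P k (\<tau> k)" "\<And>k. g (\<tau> (Suc k)) < g (\<tau> k)"
    by blast
  have "(\<lambda>k. g (\<tau> k)) \<longlonglongrightarrow> a"
  proof (rule tendsto_sandwich[where f = "\<lambda>_. a" and h = "\<lambda>k. a + inverse (real (Suc k))"])
    show "\<forall>\<^sub>F k in sequentially. a \<le> g (\<tau> k)"
      and "\<forall>\<^sub>F k in sequentially. g (\<tau> k) \<le> a + inverse (real (Suc k))"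
      using \<tau>(1) by (simp_all add: less_imp_le)
    show "(\<lambda>k. a + inverse (real (Suc k))) \<longlonglongrightarrow> a"
      using tendsto_add[OF tendsto_const LIMSEQ_inverse_real_of_nat, of a] by simp
  qed simp
  then show thesis
    using that \<tau> by blast
qed

lemma R_limitI:
  assumes "u \<in> Aface i"
    and "\<And>e. 0 < e \<Longrightarrow> \<exists>v\<in>P \<inter> Aface i. piF i u < piF i v \<and> piF i v < piF i u + e"
  shows "R_limit P i u"
proof -
  obtain \<tau> where "\<And>k. \<tau> k \<in> P \<inter> Aface i" "\<And>k. piF i (\<tau> (Suc k)) < piF i (\<tau> k)"
    "(\<lambda>k. piF i (\<tau> k)) \<longlonglongrightarrow> piF i u"
    using strict_dec_seq_tendsto[of "P \<inter> Aface i" "piF i u" "piF i"] assms(2) by blast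
  then show ?thesis
    unfolding R_limit_def using assms(1) by blast
qed

lemma L_limitI:
  assumes "u \<in> Aface i"
    and "\<And>e. 0 < e \<Longrightarrow> \<exists>v\<in>P \<inter> Aface i. piF i u - e < piF i v \<and> piF i v < piF i u"
  shows "L_limit P i u"
proof -
  have "\<exists>v\<in>P \<inter> Aface i. - piF i u < - piF i v \<and> - piF i v < - piF i u + e" if "0 < e" for e
    using assms(2)[OF that] by auto
  then obtain \<tau> where \<tau>: "\<And>k. \<tau> k \<in> P \<inter> Aface i"
    "\<And>k. - piF i (\<tau> (Suc k)) < - piF i (\<tau> k)"
    "(\<lambda>k. - piF i (\<tau> k)) \<longlonglongrightarrow> - piF i u"
    using strict_dec_seq_tendsto[of "P \<inter> Aface i" "- piF i u" "\<lambda>v. - piF i v"] by blast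
  have "(\<lambda>k. piF i (\<tau> k)) \<longlonglongrightarrow> piF i u"
    using \<tau>(3) by (simp add: tendsto_minus_cancel_left)
  then show ?thesis
    unfolding L_limit_def using assms(1) \<tau>(1,2) by auto
qed

section \<open>The switching map in face coordinates\<close>

definition fj_coord :: "(nat \<Rightarrow> real) \<Rightarrow> nat \<Rightarrow> real \<Rightarrow> real" where
  "fj_coord rho i x = lin_frac (rho i) (1 - rho (nxt i)) (theta rho) (1 - x)"

definition fk_coord :: "(nat \<Rightarrow> real) \<Rightarrow> nat \<Rightarrow> real \<Rightarrow> real" where
  "fk_coord rho i x = 1 - lin_frac (rho i) (1 - rho (nxt (nxt i))) (theta rho) x"

locale switching_system =
  fixes rho d :: "nat \<Rightarrow> real"
  assumes rho_range: "\<forall>i\<in>idx. 0 < rho i \<and> rho i < 1"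
    and rho_sum: "rho 1 + rho 2 + rho 3 > 1"
    and rho_pair: "\<forall>i\<in>idx. \<forall>j\<in>idx. i \<noteq> j \<longrightarrow> rho i + rho j \<le> 1"
    and d_range: "\<forall>i\<in>idx. 0 < d i \<and> d i < 1"
begin

lemma theta_pos: "0 < theta rho"
  using rho_sum by (simp add: theta_def)

lemma theta_eq: "i \<in> idx \<Longrightarrow> theta rho = rho i + rho (nxt i) + rho (nxt (nxt i)) - 1"
  using sum_idx[of i rho] by (simp add: theta_def)

lemma rho_pos: "i \<in> idx \<Longrightarrow> 0 < rho i"
  and rho_less_one: "i \<in> idx \<Longrightarrow> rho i < 1"
  and d_pos: "i \<in> idx \<Longrightarrow> 0 < d i"
  and d_less_one: "i \<in> idx \<Longrightarrow> d i < 1"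
  using rho_range d_range by auto

lemma rho_pair_nxt: "i \<in> idx \<Longrightarrow> rho i \<le> 1 - rho (nxt i)"
  and rho_pair_nxt_nxt: "i \<in> idx \<Longrightarrow> rho i \<le> 1 - rho (nxt (nxt i))"
  using rho_pair[rule_format, of i "nxt i"] rho_pair[rule_format, of i "nxt (nxt i)"] by simp_all

lemma fmap_pt_nxt:
  assumes i: "i \<in> idx" and "x \<le> 1"
  shows "fmap rho (nxt i) (pt x i) = pt (fj_coord rho i x) (nxt i)"
proof (rule idx_fun_eqI[OF i])
  let ?D = "1 - rho (nxt i) + theta rho * (1 - x)"
  have "0 < ?D"
    using assms rho_less_one[of "nxt i"] theta_pos by (simp add: add_pos_nonneg)
  moreover have "(1 - rho (nxt i)) * x + rho (nxt (nxt i)) * (1 - x) = ?D - rho i * (1 - x)"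
    by (simp add: theta_eq[OF i] algebra_simps)
  ultimately show "fmap rho (nxt i) (pt x i) (nxt (nxt i)) = pt (fj_coord rho i x) (nxt i) (nxt (nxt i))"
    using i by (simp add: fmap_def fj_coord_def lin_frac_def diff_divide_distrib)
qed (use i in \<open>simp_all add: fmap_def fj_coord_def lin_frac_def\<close>)

lemma fmap_pt_nxt_nxt:
  assumes i: "i \<in> idx" and "0 \<le> x"
  shows "fmap rho (nxt (nxt i)) (pt x i) = pt (fk_coord rho i x) (nxt (nxt i))"
proof (rule idx_fun_eqI[OF i])
  let ?D = "1 - rho (nxt (nxt i)) + theta rho * x"
  have "0 < ?D"
    using assms rho_less_one[of "nxt (nxt i)"] theta_pos by (simp add: add_pos_nonneg)
  moreover have "(1 - rho (nxt (nxt i))) * (1 - x) + rho (nxt i) * x = ?D - rho i * x"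
    by (simp add: theta_eq[OF i] algebra_simps)
  ultimately show "fmap rho (nxt (nxt i)) (pt x i) (nxt i) = pt (fk_coord rho i x) (nxt (nxt i)) (nxt i)"
    using i by (simp add: fmap_def fk_coord_def lin_frac_def diff_divide_distrib)
qed (use i in \<open>simp_all add: fmap_def fk_coord_def lin_frac_def\<close>)

lemma fj_coord_strict_antimono:
  "i \<in> idx \<Longrightarrow> x < y \<Longrightarrow> y \<le> 1 \<Longrightarrow> fj_coord rho i y < fj_coord rho i x"
  unfolding fj_coord_def
  using rho_pos rho_less_one[of "nxt i"] theta_pos by (intro lin_frac_strict_mono) auto

lemma fk_coord_strict_antimono:
  "i \<in> idx \<Longrightarrow> 0 \<le> x \<Longrightarrow> x < y \<Longrightarrow> fk_coord rho i y < fk_coord rho i x"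
  unfolding fk_coord_def
  using rho_pos rho_less_one[of "nxt (nxt i)"] theta_pos lin_frac_strict_mono by simp

lemma fj_coord_inj:
  "i \<in> idx \<Longrightarrow> x \<le> 1 \<Longrightarrow> y \<le> 1 \<Longrightarrow> fj_coord rho i x = fj_coord rho i y \<Longrightarrow> x = y"
  by (metis fj_coord_strict_antimono less_irrefl linorder_neqE_linordered_idom)

lemma fk_coord_inj:
  "i \<in> idx \<Longrightarrow> 0 \<le> x \<Longrightarrow> 0 \<le> y \<Longrightarrow> fk_coord rho i x = fk_coord rho i y \<Longrightarrow> x = y"
  by (metis fk_coord_strict_antimono less_irrefl linorder_neqE_linordered_idom)

lemma fj_coord_range:
  assumes i: "i \<in> idx" and "0 \<le> x" "x < 1"
  shows "0 < fj_coord rho i x" "fj_coord rho i x < 1"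
  unfolding fj_coord_def
  using assms rho_pos rho_less_one[of "nxt i"] theta_pos theta_eq[OF i] rho_pos[of "nxt (nxt i)"]
  by (auto intro!: lin_frac_pos lin_frac_less_one)

lemma fk_coord_range:
  assumes i: "i \<in> idx" and "0 < x" "x \<le> 1"
  shows "0 < fk_coord rho i x" "fk_coord rho i x < 1"
  unfolding fk_coord_def
  using assms rho_pos rho_less_one[of "nxt (nxt i)"] theta_pos theta_eq[OF i] rho_pos[of "nxt i"]
  by (auto intro!: lin_frac_pos lin_frac_less_one)

lemma fk_coord_vertex:
  assumes i: "i \<in> idx"
  shows "fk_coord rho (nxt (nxt i)) 1 = fj_coord rho i 0"
proof -
  have "0 < rho i + rho (nxt (nxt i))"
    using i rho_pos[of i] rho_pos[of "nxt (nxt i)"] by simp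
  then show ?thesis
    using i by (simp add: fk_coord_def fj_coord_def lin_frac_def theta_eq[OF i] field_simps)
qed

definition fj_lip :: "nat \<Rightarrow> real" where
  "fj_lip i = rho i * (1 - rho (nxt i)) / (1 - rho (nxt i) + theta rho * (1 - d i))\<^sup>2"

definition fk_lip :: "nat \<Rightarrow> real" where
  "fk_lip i = rho i * (1 - rho (nxt (nxt i))) / (1 - rho (nxt (nxt i)) + theta rho * d i)\<^sup>2"

definition contraction :: real where
  "contraction = Max (fj_lip ` idx \<union> fk_lip ` idx)"

lemma fj_lip_pos: "i \<in> idx \<Longrightarrow> 0 < fj_lip i"
  and fj_lip_less_one: "i \<in> idx \<Longrightarrow> fj_lip i < 1"
  and fk_lip_less_one: "i \<in> idx \<Longrightarrow> fk_lip i < 1"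
proof -
  assume i: "i \<in> idx"
  have "0 < 1 - rho (nxt i) + theta rho * (1 - d i)"
    using i rho_less_one[of "nxt i"] theta_pos d_less_one[OF i] by (simp add: add_pos_pos)
  then show "0 < fj_lip i"
    unfolding fj_lip_def using i rho_pos[OF i] rho_less_one[of "nxt i"] by simp
  show "fj_lip i < 1"
    unfolding fj_lip_def using i rho_pos[OF i] rho_pair_nxt[OF i] theta_pos d_less_one[OF i]
    by (intro lin_frac_lipschitz_const_less_one) auto
  show "fk_lip i < 1"
    unfolding fk_lip_def using i rho_pos[OF i] rho_pair_nxt_nxt[OF i] theta_pos d_pos[OF i]
    by (intro lin_frac_lipschitz_const_less_one) auto
qed

lemma contraction_ge:
  "i \<in> idx \<Longrightarrow> fj_lip i \<le> contraction" "i \<in> idx \<Longrightarrow> fk_lip i \<le> contraction"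
  unfolding contraction_def by (intro Max_ge; auto simp: idx_def)+

lemma contraction_pos: "0 < contraction"
  using fj_lip_pos[of 1] contraction_ge(1)[of 1] by (simp add: idx_def)

lemma contraction_less_one: "contraction < 1"
proof -
  have "contraction \<in> fj_lip ` idx \<union> fk_lip ` idx"
    unfolding contraction_def by (intro Max_in) (auto simp: idx_def)
  then show ?thesis
    using fj_lip_less_one fk_lip_less_one by auto
qed

lemma fj_coord_contracts:
  assumes i: "i \<in> idx" and "0 \<le> x" "x \<le> d i" "0 \<le> y" "y \<le> d i"
  shows "\<bar>fj_coord rho i x - fj_coord rho i y\<bar> \<le> contraction * \<bar>x - y\<bar>"
proof -
  have "\<bar>fj_coord rho i x - fj_coord rho i y\<bar> \<le> fj_lip i * \<bar>(1 - x) - (1 - y)\<bar>"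
    unfolding fj_coord_def fj_lip_def
    using assms rho_pos[OF i] rho_less_one[of "nxt i"] theta_pos d_less_one[OF i]
    by (intro lin_frac_lipschitz) auto
  also have "\<dots> \<le> contraction * \<bar>x - y\<bar>"
    using contraction_ge(1)[OF i] by (simp add: abs_minus_commute mult_right_mono)
  finally show ?thesis .
qed

lemma fk_coord_contracts:
  assumes i: "i \<in> idx" and "d i \<le> x" "x \<le> 1" "d i \<le> y" "y \<le> 1"
  shows "\<bar>fk_coord rho i x - fk_coord rho i y\<bar> \<le> contraction * \<bar>x - y\<bar>"
proof -
  have "\<bar>fk_coord rho i x - fk_coord rho i y\<bar>
      = \<bar>lin_frac (rho i) (1 - rho (nxt (nxt i))) (theta rho) x
          - lin_frac (rho i) (1 - rho (nxt (nxt i))) (theta rho) y\<bar>"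
    by (simp add: fk_coord_def abs_minus_commute)
  also have "\<dots> \<le> fk_lip i * \<bar>x - y\<bar>"
    unfolding fk_lip_def
    using assms rho_pos[OF i] rho_less_one[of "nxt (nxt i)"] theta_pos d_pos[OF i]
    by (intro lin_frac_lipschitz) auto
  also have "\<dots> \<le> contraction * \<bar>x - y\<bar>"
    using contraction_ge(2)[OF i] by (simp add: mult_right_mono)
  finally show ?thesis .
qed

lemma phi_cases:
  assumes "y \<in> phi rho d w"
  obtains (fj) i x where "i \<in> idx" "0 \<le> x" "x \<le> d i" "w = pt x i" "y = pt (fj_coord rho i x) (nxt i)"
  | (fk) i x where "i \<in> idx" "d i \<le> x" "x \<le> 1" "w = pt x i" "y = pt (fk_coord rho i x) (nxt (nxt i))"
proof -
  obtain j i where y: "y = fmap rho j w" and i: "i \<in> idx" "w \<in> Aface i"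
    and j: "piF i w \<le> d i \<and> j = nxt i \<or> d i \<le> piF i w \<and> j = nxt (nxt i)"
    using assms unfolding phi_def allowed_def by blast
  define x where "x = piF i w"
  have w: "w = pt x i" and x: "0 \<le> x" "x \<le> 1"
    using Aface_eq_pt[OF i] unfolding x_def by simp_all
  from j[folded x_def] show thesis
  proof (elim disjE conjE)
    assume "x \<le> d i" "j = nxt i"
    then show thesis
      using fj[OF i(1) x(1) _ w] fmap_pt_nxt[OF i(1) x(2)] y w by simp
  next
    assume "d i \<le> x" "j = nxt (nxt i)"
    then show thesis
      using fk[OF i(1) _ x(2) w] fmap_pt_nxt_nxt[OF i(1) x(1)] y w by simp
  qed
qed

lemma phi_interior_cases:
  assumes f: "f \<in> idx" and x: "0 < x" "x < 1" and y: "y \<in> phi rho d (pt x f)"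
  shows "x \<le> d f \<and> y = pt (fj_coord rho f x) (nxt f) \<or> d f \<le> x \<and> y = pt (fk_coord rho f x) (nxt (nxt f))"
  using y
proof (cases rule: phi_cases)
  case (fj i x')
  then have "i = f" "x' = x"
    using pt_eq_pt_iff[OF _ f x] by simp_all
  then show ?thesis
    using fj by simp
next
  case (fk i x')
  then have "i = f" "x' = x"
    using pt_eq_pt_iff[OF _ f x] by simp_all
  then show ?thesis
    using fk by simp
qed

lemma phi_interior:
  assumes "y \<in> phi rho d w"
  obtains f x where "f \<in> idx" "0 < x" "x < 1" "y = pt x f"
  using assms
proof (cases rule: phi_cases)
  case (fj i x)
  then show thesis
    using that[of "nxt i"] fj_coord_range[of i x] d_less_one[of i] by simp
next
  case (fk i x)
  then show thesis
    using that[of "nxt (nxt i)"] fk_coord_range[of i x] d_pos[of i] by simp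
qed

lemma phi_subset_A0: "phi rho d w \<subseteq> A0"
proof
  fix y assume "y \<in> phi rho d w"
  then obtain f x where "f \<in> idx" "0 < x" "x < 1" "y = pt x f"
    by (rule phi_interior)
  then show "y \<in> A0"
    unfolding A0_def by (auto intro!: bexI[of _ f] pt_in_Aface)
qed

lemma phi_nonempty:
  assumes "w \<in> A0"
  shows "phi rho d w \<noteq> {}"
proof -
  obtain i where i: "i \<in> idx" "w \<in> Aface i"
    using assms unfolding A0_def by blast
  have "allowed d w (if piF i w \<le> d i then nxt i else nxt (nxt i))"
    unfolding allowed_def using i by (intro bexI[OF _ i(1)]) simp
  then show ?thesis
    unfolding phi_def by blast
qed

lemma fj_fk_images_meet_at_vertex:
  assumes i1: "i1 \<in> idx" and i2: "i2 \<in> idx"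
    and x1: "0 \<le> x1" "x1 \<le> d i1" and x2: "d i2 \<le> x2" "x2 \<le> 1"
    and eq: "pt (fj_coord rho i1 x1) (nxt i1) = pt (fk_coord rho i2 x2) (nxt (nxt i2))"
  shows "pt x1 i1 = pt x2 i2"
proof -
  have "0 < fj_coord rho i1 x1" "fj_coord rho i1 x1 < 1"
    using fj_coord_range[OF i1 x1(1)] x1(2) d_less_one[OF i1] by simp_all
  then have "nxt (nxt i2) = nxt i1" and orbit_coords: "fk_coord rho i2 x2 = fj_coord rho i1 x1"
    using eq pt_eq_pt_iff[of "nxt (nxt i2)" "nxt i1"] i1 i2 by auto
  then have i2_eq: "i2 = nxt (nxt i1)"
    using i2 by (metis nxt_nxt_nxt)
  have "fj_coord rho i1 x1 \<le> fj_coord rho i1 0"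
    using fj_coord_strict_antimono[OF i1, of 0 x1] x1 d_less_one[OF i1] by fastforce
  moreover have "fk_coord rho i2 1 \<le> fk_coord rho i2 x2"
    using fk_coord_strict_antimono[OF i2, of x2 1] x2 d_pos[OF i2] by fastforce
  moreover have "fk_coord rho i2 1 = fj_coord rho i1 0"
    using fk_coord_vertex[OF i1] i2_eq by simp
  ultimately have "fj_coord rho i1 x1 = fj_coord rho i1 0" "fk_coord rho i2 x2 = fk_coord rho i2 1"
    using orbit_coords by linarith+
  then have "x1 = 0" "x2 = 1"
    using fj_coord_inj[OF i1] fk_coord_inj[OF i2] x1 x2 d_less_one[OF i1] d_pos[OF i2] by force+
  then show ?thesis
    using pt_vertex[OF i1] i2_eq by simp
qed

lemma fj_image_inj:
  assumes i1: "i1 \<in> idx" and i2: "i2 \<in> idx" and "0 \<le> x1" "x1 \<le> d i1" "x2 \<le> d i2"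
    and eq: "pt (fj_coord rho i1 x1) (nxt i1) = pt (fj_coord rho i2 x2) (nxt i2)"
  shows "pt x1 i1 = pt x2 i2"
proof -
  have "0 < fj_coord rho i1 x1" "fj_coord rho i1 x1 < 1"
    using fj_coord_range[OF i1] assms d_less_one[OF i1] by simp_all
  then have "nxt i2 = nxt i1 \<and> fj_coord rho i2 x2 = fj_coord rho i1 x1"
    using eq pt_eq_pt_iff[OF nxt_in_idx[OF i2] nxt_in_idx[OF i1]] by blast
  then have same: "i2 = i1" "fj_coord rho i1 x2 = fj_coord rho i1 x1"
    using i1 i2 by auto
  have "x2 \<le> 1" "x1 \<le> 1"
    using assms d_less_one[OF i1] d_less_one[OF i2] by linarith+
  then show ?thesis
    using fj_coord_inj[OF i1 _ _ same(2)] same(1) by simp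
qed

lemma fk_image_inj:
  assumes i1: "i1 \<in> idx" and i2: "i2 \<in> idx" and "d i1 \<le> x1" "x1 \<le> 1" "d i2 \<le> x2"
    and eq: "pt (fk_coord rho i1 x1) (nxt (nxt i1)) = pt (fk_coord rho i2 x2) (nxt (nxt i2))"
  shows "pt x1 i1 = pt x2 i2"
proof -
  have "0 < fk_coord rho i1 x1" "fk_coord rho i1 x1 < 1"
    using fk_coord_range[OF i1] assms d_pos[OF i1] by simp_all
  then have "nxt (nxt i2) = nxt (nxt i1) \<and> fk_coord rho i2 x2 = fk_coord rho i1 x1"
    using eq pt_eq_pt_iff[OF nxt_in_idx[OF nxt_in_idx[OF i2]] nxt_in_idx[OF nxt_in_idx[OF i1]]] by blast
  then have same: "i2 = i1" "fk_coord rho i1 x2 = fk_coord rho i1 x1"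
    using i1 i2 by auto
  have "0 \<le> x2" "0 \<le> x1"
    using assms d_pos[OF i1] d_pos[OF i2] by linarith+
  then show ?thesis
    using fk_coord_inj[OF i1 _ _ same(2)] same(1) by simp
qed

lemma phi_inj:
  assumes y1: "y \<in> phi rho d w1" and y2: "y \<in> phi rho d w2"
  shows "w1 = w2"
  using y1
proof (cases rule: phi_cases)
  case fj1: (fj i1 x1)
  from y2 show ?thesis
  proof (cases rule: phi_cases)
    case (fj i2 x2)
    then show ?thesis
      using fj1 fj_image_inj[of i1 i2 x1 x2] by simp
  next
    case (fk i2 x2)
    then show ?thesis
      using fj1 fj_fk_images_meet_at_vertex[of i1 i2 x1 x2] by simp
  qed
next
  case fk1: (fk i1 x1)
  from y2 show ?thesis
  proof (cases rule: phi_cases)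
    case (fj i2 x2)
    then show ?thesis
      using fk1 fj_fk_images_meet_at_vertex[of i2 i1 x2 x1] by simp
  next
    case (fk i2 x2)
    then show ?thesis
      using fk1 fk_image_inj[of i1 i2 x1 x2] by simp
  qed
qed

definition phi_inv :: "(nat \<Rightarrow> real) \<Rightarrow> (nat \<Rightarrow> real)" where
  "phi_inv y = (SOME w. y \<in> phi rho d w)"

lemma phi_inv_eq: "y \<in> phi rho d w \<Longrightarrow> phi_inv y = w"
  unfolding phi_inv_def by (rule some_equality) (auto intro: phi_inj)

lemma dpt_in_A0:
  assumes "i \<in> idx"
  shows "dpt d i \<in> A0"
  unfolding A0_def dpt_def
  using assms d_pos[OF assms] d_less_one[OF assms] by (auto intro!: bexI[of _ i] pt_in_Aface)

lemma trajectory_exists: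
  assumes "w \<in> A0"
  shows "\<exists>s. trajectory rho d s \<and> s 0 = w"
proof -
  define s where "s = rec_nat w (\<lambda>_ z. SOME y. y \<in> phi rho d z)"
  have step: "s (Suc n) \<in> phi rho d (s n)" if "s n \<in> A0" for n
    using phi_nonempty[OF that] by (simp add: s_def some_in_eq)
  have "s n \<in> A0" for n
    using assms step phi_subset_A0 by (induction n) (auto simp: s_def)
  then have "trajectory rho d s"
    using step unfolding trajectory_def by blast
  moreover have "s 0 = w"
    by (simp add: s_def)
  ultimately show ?thesis
    by blast
qed

lemma trajectory_Cons:
  "trajectory rho d s \<Longrightarrow> s 0 \<in> phi rho d z \<Longrightarrow> trajectory rho d (case_nat z s)"
  unfolding trajectory_def by (auto split: nat.split)

lemma trajectory_backwards:
  assumes "trajectory rho d s" "k \<le> t"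
  shows "s (t - k) = (phi_inv ^^ k) (s t)"
  using assms(2)
proof (induction k)
  case (Suc k)
  have "s (Suc (t - Suc k)) \<in> phi rho d (s (t - Suc k))"
    using assms(1) unfolding trajectory_def by blast
  moreover have "Suc (t - Suc k) = t - k"
    using Suc.prems by simp
  ultimately show ?case
    using Suc by (simp add: phi_inv_eq)
qed simp

end

section \<open>The backward orbit of the decision point on the first face\<close>

locale standing_assumptions = switching_system +
  assumes inf1: "infinite {z. preimage rho d z (dpt d 1)}"
    and fin2: "finite {z. preimage rho d z (dpt d 2)}"
    and fin3: "finite {z. preimage rho d z (dpt d 3)}"
begin

definition back_orbit :: "nat \<Rightarrow> (nat \<Rightarrow> real)" where
  "back_orbit n = (phi_inv ^^ n) (dpt d 1)"

lemma preimage_dpt1_in_back_orbit: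
  assumes "preimage rho d z (dpt d 1)"
  obtains s t where "trajectory rho d s" "s t = dpt d 1" "z = back_orbit t"
proof -
  obtain s t where "trajectory rho d s" "s 0 = z" "1 \<le> t" "s t = dpt d 1"
    using assms unfolding preimage_def by blast
  moreover have "z = back_orbit t"
    using trajectory_backwards[of s t t] calculation by (simp add: back_orbit_def)
  ultimately show thesis
    using that by blast
qed

lemma back_orbit_step: "back_orbit k \<in> phi rho d (back_orbit (Suc k))"
proof -
  have "infinite ({z. preimage rho d z (dpt d 1)} - back_orbit ` {..k})"
    using inf1 by (simp add: Diff_infinite_finite)
  then obtain z where z: "preimage rho d z (dpt d 1)" and z_new: "z \<notin> back_orbit ` {..k}"
    using infinite_imp_nonempty by blast
  obtain s t where s: "trajectory rho d s" "s t = dpt d 1" "z = back_orbit t"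
    using z by (rule preimage_dpt1_in_back_orbit)
  then have "k < t"
    using z_new by (metis atMost_iff image_eqI not_le_imp_less)
  then have "s (t - k) = back_orbit k" "s (t - Suc k) = back_orbit (Suc k)"
    using trajectory_backwards[OF s(1)] s(2) by (simp_all add: back_orbit_def)
  moreover have "s (Suc (t - Suc k)) \<in> phi rho d (s (t - Suc k))"
    using s(1) unfolding trajectory_def by blast
  ultimately show ?thesis
    using \<open>k < t\<close> by (simp add: Suc_diff_Suc)
qed

lemma back_orbit_trajectory:
  "\<exists>s. trajectory rho d s \<and> s 0 = back_orbit k \<and> s k = dpt d 1"
proof (induction k)
  case 0
  then show ?case
    using trajectory_exists[OF dpt_in_A0[of 1]] by (simp add: back_orbit_def idx_def)
next
  case (Suc k)
  then obtain s where "trajectory rho d s" "s 0 = back_orbit k" "s k = dpt d 1"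
    by blast
  then show ?case
    using trajectory_Cons[of s "back_orbit (Suc k)"] back_orbit_step[of k]
    by (intro exI[of _ "case_nat (back_orbit (Suc k)) s"]) simp
qed

lemma preimage_back_orbit:
  assumes "a < k"
  shows "preimage rho d (back_orbit k) (back_orbit a)"
proof -
  obtain s where s: "trajectory rho d s" "s 0 = back_orbit k" "s k = dpt d 1"
    using back_orbit_trajectory by blast
  then have "s (k - a) = back_orbit a"
    using trajectory_backwards[OF s(1), of a k] assms by (simp add: back_orbit_def)
  then show ?thesis
    unfolding preimage_def using s assms by (intro exI[of _ s] conjI exI[of _ "k - a"]) auto
qed

lemma P1_eq_range: "P1 rho d = range back_orbit"
proof
  show "P1 rho d \<subseteq> range back_orbit"
  proof
    fix z
    assume "z \<in> P1 rho d"
    then consider "z = back_orbit 0" | "preimage rho d z (dpt d 1)"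
      unfolding P1_def back_orbit_def by auto
    then show "z \<in> range back_orbit"
    proof cases
      case 2
      then show ?thesis
        by (rule preimage_dpt1_in_back_orbit) simp
    qed simp
  qed
  show "range back_orbit \<subseteq> P1 rho d"
  proof clarify
    fix k
    show "back_orbit k \<in> P1 rho d"
      using preimage_back_orbit[of 0 k] unfolding P1_def back_orbit_def
      by (cases k) auto
  qed
qed

lemma back_orbit_shift: "back_orbit (n + k) = (phi_inv ^^ k) (back_orbit n)"
  by (simp add: back_orbit_def funpow_add add.commute)

lemma inj_back_orbit: "inj back_orbit"
proof (rule ccontr)
  assume "\<not> inj back_orbit"
  then obtain a b where ab: "a < b" "back_orbit a = back_orbit b"
    by (metis injI linorder_neqE_nat)
  have periodic: "back_orbit (n + (b - a)) = back_orbit n" if "a \<le> n" for n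
  proof -
    have "n + (b - a) = b + (n - a)" "n = a + (n - a)"
      using ab that by simp_all
    then show ?thesis
      using back_orbit_shift[of a "n - a"] back_orbit_shift[of b "n - a"] ab(2) by metis
  qed
  have "back_orbit n \<in> back_orbit ` {..<b}" for n
  proof (induction n rule: less_induct)
    case (less n)
    show ?case
    proof (cases "n < b")
      case False
      then have "back_orbit n = back_orbit (n - (b - a))" "n - (b - a) < n"
        using periodic[of "n - (b - a)"] ab by simp_all
      then show ?thesis
        using less by simp
    qed simp
  qed
  then have "finite (P1 rho d)"
    unfolding P1_eq_range by (metis finite_lessThan finite_surj image_subsetI)
  then show False
    using inf1 unfolding P1_def by simp
qed

lemma back_orbit_not_decision_point:
  assumes "f \<in> idx"
  shows "back_orbit (Suc n) \<noteq> dpt d f"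
proof
  assume eq: "back_orbit (Suc n) = dpt d f"
  have "back_orbit ` {Suc n<..} \<subseteq> {z. preimage rho d z (dpt d f)}"
    using preimage_back_orbit[of "Suc n"] unfolding eq[symmetric] by auto
  moreover have "infinite (back_orbit ` {Suc n<..})"
    using inj_back_orbit infinite_Ioi by (simp add: finite_image_iff inj_on_subset)
  ultimately have "infinite {z. preimage rho d z (dpt d f)}"
    using finite_subset by blast
  moreover have "f \<noteq> 1"
    using eq inj_back_orbit unfolding back_orbit_def inj_def by (metis funpow_0 nat.distinct(1))
  ultimately show False
    using assms fin2 fin3 by (auto simp: idx_def)
qed

definition face :: "nat \<Rightarrow> nat" where
  "face n = (SOME f. f \<in> idx \<and> (\<exists>x. 0 < x \<and> x < 1 \<and> back_orbit n = pt x f))"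

definition coord :: "nat \<Rightarrow> real" where
  "coord n = piF (face n) (back_orbit n)"

lemma face_coord:
  shows face_in_idx: "face n \<in> idx"
    and coord_pos: "0 < coord n"
    and coord_less_one: "coord n < 1"
    and back_orbit_eq_pt: "back_orbit n = pt (coord n) (face n)"
proof -
  obtain f x where "f \<in> idx" "0 < x" "x < 1" "back_orbit n = pt x f"
    using back_orbit_step[of n] by (rule phi_interior)
  then have "\<exists>f. f \<in> idx \<and> (\<exists>x. 0 < x \<and> x < 1 \<and> back_orbit n = pt x f)"
    by blast
  then have "face n \<in> idx \<and> (\<exists>x. 0 < x \<and> x < 1 \<and> back_orbit n = pt x (face n))"
    unfolding face_def by (rule someI_ex)
  then show "face n \<in> idx" "0 < coord n" "coord n < 1" "back_orbit n = pt (coord n) (face n)"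
    unfolding coord_def by auto
qed

lemma face_coord_unique:
  assumes "back_orbit n = pt x f" "f \<in> idx" "0 < x" "x < 1"
  shows "face n = f" "coord n = x"
proof -
  have "pt x f = pt (coord n) (face n)"
    using assms(1) back_orbit_eq_pt[of n] by simp
  then show "face n = f" "coord n = x"
    using pt_eq_pt_iff[OF face_in_idx assms(2-4)] by blast+
qed

lemma face_coord_0: "face 0 = 1" "coord 0 = d 1"
  using face_coord_unique[of 0 "d 1" 1] d_pos[of 1] d_less_one[of 1]
  by (simp_all add: back_orbit_def dpt_def idx_def)

lemma back_orbit_in_Aface_iff:
  assumes i: "i \<in> idx"
  shows "back_orbit n \<in> Aface i \<longleftrightarrow> i = face n"
proof
  assume "back_orbit n \<in> Aface i"
  then have "pt (coord n) (face n) = pt (piF i (back_orbit n)) i"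
    using Aface_eq_pt(1)[OF i] back_orbit_eq_pt by metis
  then show "i = face n"
    using pt_eq_pt_iff[OF i face_in_idx coord_pos coord_less_one] by blast
next
  assume "i = face n"
  then show "back_orbit n \<in> Aface i"
    using face_coord[of n] pt_in_Aface[of "face n" "coord n"] by simp
qed

lemma face_coord_inj: "face a = face b \<Longrightarrow> coord a = coord b \<Longrightarrow> a = b"
  using inj_back_orbit back_orbit_eq_pt by (metis injD)

lemma back_orbit_step_coords:
  fixes n :: nat
  defines "f \<equiv> face (Suc n)" and "x \<equiv> coord (Suc n)"
  shows "x < d f \<and> face n = nxt f \<and> coord n = fj_coord rho f x
       \<or> d f < x \<and> face n = nxt (nxt f) \<and> coord n = fk_coord rho f x"
proof -
  have f: "f \<in> idx" and x: "0 < x" "x < 1" and eq: "back_orbit (Suc n) = pt x f"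
    using face_coord unfolding f_def x_def by auto
  have "x \<noteq> d f"
    using back_orbit_not_decision_point[OF f, of n] eq by (auto simp: dpt_def)
  moreover have "x \<le> d f \<and> back_orbit n = pt (fj_coord rho f x) (nxt f)
      \<or> d f \<le> x \<and> back_orbit n = pt (fk_coord rho f x) (nxt (nxt f))"
    using phi_interior_cases[OF f x] back_orbit_step[of n] eq by simp
  ultimately show ?thesis
  proof (elim disjE conjE)
    assume "x \<le> d f" "back_orbit n = pt (fj_coord rho f x) (nxt f)"
    moreover have "0 < fj_coord rho f x" "fj_coord rho f x < 1"
      using fj_coord_range[OF f] x by simp_all
    ultimately show ?thesis
      using face_coord_unique[of n] f \<open>x \<noteq> d f\<close> by simp
  next
    assume "d f \<le> x" "back_orbit n = pt (fk_coord rho f x) (nxt (nxt f))"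
    moreover have "0 < fk_coord rho f x" "fk_coord rho f x < 1"
      using fk_coord_range[OF f] x by simp_all
    ultimately show ?thesis
      using face_coord_unique[of n] f \<open>x \<noteq> d f\<close> by simp
  qed
qed

definition orbit_coords :: "nat \<Rightarrow> real set" where
  "orbit_coords f = {coord t | t. face t = f}"

lemma orbit_coords_fj_image:
  assumes "y \<in> orbit_coords f" "y < d f"
  shows "fj_coord rho f y \<in> orbit_coords (nxt f)"
proof -
  obtain t where t: "face t = f" "coord t = y"
    using assms(1) unfolding orbit_coords_def by blast
  then obtain t' where "t = Suc t'"
    using assms(2) face_coord_0 by (cases t) auto
  then have "face t' = nxt f" "coord t' = fj_coord rho f y"
    using back_orbit_step_coords[of t'] t assms(2) by auto
  then show ?thesis
    unfolding orbit_coords_def by (auto intro!: exI[of _ t'])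
qed

lemma orbit_coords_fk_image:
  assumes "y \<in> orbit_coords f" "d f < y"
  shows "fk_coord rho f y \<in> orbit_coords (nxt (nxt f))"
proof -
  obtain t where t: "face t = f" "coord t = y"
    using assms(1) unfolding orbit_coords_def by blast
  then obtain t' where "t = Suc t'"
    using assms(2) face_coord_0 by (cases t) auto
  then have "face t' = nxt (nxt f)" "coord t' = fk_coord rho f y"
    using back_orbit_step_coords[of t'] t assms(2) by auto
  then show ?thesis
    unfolding orbit_coords_def by (auto intro!: exI[of _ t'])
qed

section \<open>Orbit-free gaps\<close>

definition left_gap :: "nat \<Rightarrow> real \<Rightarrow> bool" where
  "left_gap n a \<longleftrightarrow> a < coord n \<and> orbit_coords (face n) \<inter> {a<..<coord n} = {}"

definition right_gap :: "nat \<Rightarrow> real \<Rightarrow> bool" where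
  "right_gap n b \<longleftrightarrow> coord n < b \<and> orbit_coords (face n) \<inter> {coord n<..<b} = {}"

definition has_gap :: "nat \<Rightarrow> real \<Rightarrow> bool" where
  "has_gap n l \<longleftrightarrow> 0 < l \<and>
     (left_gap n (coord n - l) \<and> 0 \<le> coord n - l \<or> right_gap n (coord n + l) \<and> coord n + l \<le> 1)"

(* The ends of the intervals on which phi acts on a face by a single Moebius map. *)
definition breakpoints :: "real set" where
  "breakpoints = {0, 1, d 1, d 2, d 3}"

definition at_breakpoint :: "nat \<Rightarrow> bool" where
  "at_breakpoint n \<longleftrightarrow> (\<exists>e\<in>breakpoints. left_gap n e \<or> right_gap n e)"

lemma breakpoints_bounds: "e \<in> breakpoints \<Longrightarrow> 0 \<le> e \<and> e \<le> 1"
  using d_pos d_less_one by (force simp: breakpoints_def idx_def)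

lemma has_gap_le_one: "has_gap n l \<Longrightarrow> l \<le> 1"
  using coord_pos[of n] coord_less_one[of n] by (auto simp: has_gap_def)

lemma at_breakpoint_has_gap: "at_breakpoint n \<Longrightarrow> \<exists>l. has_gap n l"
proof -
  assume "at_breakpoint n"
  then obtain e where e: "e \<in> breakpoints" "left_gap n e \<or> right_gap n e"
    unfolding at_breakpoint_def by blast
  then have "has_gap n (coord n - e) \<or> has_gap n (e - coord n)"
    using breakpoints_bounds[OF e(1)] by (auto simp: has_gap_def left_gap_def right_gap_def)
  then show ?thesis
    by blast
qed

lemma left_gap_unique:
  assumes f: "face a = face b" and "left_gap a e" "left_gap b e"
  shows "a = b"
proof -
  have "coord a \<in> orbit_coords (face b)" "coord b \<in> orbit_coords (face a)"
    using f unfolding orbit_coords_def by auto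
  then have "coord a = coord b"
    using assms unfolding left_gap_def by (meson disjoint_iff greaterThanLessThan_iff linorder_neqE)
  then show ?thesis
    using face_coord_inj[OF f] by simp
qed

lemma right_gap_unique:
  assumes f: "face a = face b" and "right_gap a e" "right_gap b e"
  shows "a = b"
proof -
  have "coord a \<in> orbit_coords (face b)" "coord b \<in> orbit_coords (face a)"
    using f unfolding orbit_coords_def by auto
  then have "coord a = coord b"
    using assms unfolding right_gap_def by (meson disjoint_iff greaterThanLessThan_iff linorder_neqE)
  then show ?thesis
    using face_coord_inj[OF f] by simp
qed

lemma finite_at_breakpoint: "finite {n. at_breakpoint n}"
proof -
  have "face ` A \<subseteq> idx" for A
    using face_in_idx by blast
  then have "finite {n. left_gap n e}" "finite {n. right_gap n e}" for e
    using left_gap_unique right_gap_unique finite_idx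
    by (metis (mono_tags, lifting) inj_onI inj_on_finite mem_Collect_eq)+
  then have "finite (\<Union>e\<in>breakpoints. {n. left_gap n e} \<union> {n. right_gap n e})"
    by (simp add: breakpoints_def)
  moreover have "{n. at_breakpoint n} = (\<Union>e\<in>breakpoints. {n. left_gap n e} \<union> {n. right_gap n e})"
    unfolding at_breakpoint_def by blast
  ultimately show ?thesis
    by simp
qed

lemma left_free_imp_gap:
  assumes "orbit_coords (face m) \<inter> {max a (coord m - r)<..<coord m} = {}"
    and "a \<in> breakpoints" "a < coord m" "0 < r"
  shows "at_breakpoint m \<or> has_gap m r"
proof (cases "coord m - r \<le> a")
  case True
  then have "left_gap m a"
    using assms unfolding left_gap_def by simp
  then show ?thesis
    using assms(2) unfolding at_breakpoint_def by blast
next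
  case False
  then show ?thesis
    using assms breakpoints_bounds[OF assms(2)] unfolding has_gap_def left_gap_def by simp
qed

lemma right_free_imp_gap:
  assumes "orbit_coords (face m) \<inter> {coord m<..<min b (coord m + r)} = {}"
    and "b \<in> breakpoints" "coord m < b" "0 < r"
  shows "at_breakpoint m \<or> has_gap m r"
proof (cases "b \<le> coord m + r")
  case True
  then have "right_gap m b"
    using assms unfolding right_gap_def by simp
  then show ?thesis
    using assms(2) unfolding at_breakpoint_def by blast
next
  case False
  then show ?thesis
    using assms breakpoints_bounds[OF assms(2)] unfolding has_gap_def right_gap_def by simp
qed

lemma has_gap_Suc_pullback:
  fixes g :: "real \<Rightarrow> real" and n :: nat
  defines "x \<equiv> coord (Suc n)"
  assumes ab: "a \<in> breakpoints" "b \<in> breakpoints" "a < x" "x < b"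
    and g: "coord n = g x"
    and maps: "\<And>y. y \<in> orbit_coords (face (Suc n)) \<Longrightarrow> a < y \<Longrightarrow> y < b
      \<Longrightarrow> g y \<in> orbit_coords (face n)"
    and lip: "\<And>y. a < y \<Longrightarrow> y < b \<Longrightarrow> \<bar>g y - g x\<bar> \<le> contraction * \<bar>y - x\<bar>"
    and anti: "\<And>y z. a < y \<Longrightarrow> y < z \<Longrightarrow> z < b \<Longrightarrow> g z < g y"
    and gap: "has_gap n l"
  shows "at_breakpoint (Suc n) \<or> has_gap (Suc n) (l / contraction)"
proof -
  have r: "0 < l / contraction"
    using gap contraction_pos by (simp add: has_gap_def)
  from gap consider "orbit_coords (face n) \<inter> {g x - l<..<g x} = {}"
    | "orbit_coords (face n) \<inter> {g x<..<g x + l} = {}"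
    unfolding has_gap_def left_gap_def right_gap_def g by blast
  then show ?thesis
  proof cases
    case 1
    have "orbit_coords (face (Suc n)) \<inter> {x<..<min b (x + l / contraction)} = {}"
      using ab(3,4) contraction_pos maps lip anti 1 by (rule gap_pullback_left)
    then show ?thesis
      using right_free_imp_gap ab(2,4) r unfolding x_def by blast
  next
    case 2
    have "orbit_coords (face (Suc n)) \<inter> {max a (x - l / contraction)<..<x} = {}"
      using ab(3,4) contraction_pos maps lip anti 2 by (rule gap_pullback_right)
    then show ?thesis
      using left_free_imp_gap ab(1,3) r unfolding x_def by blast
  qed
qed

lemma has_gap_Suc:
  assumes gap: "has_gap n l"
  shows "at_breakpoint (Suc n) \<or> has_gap (Suc n) (l / contraction)"
proof -
  define f x where "f = face (Suc n)" and "x = coord (Suc n)"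
  have f: "f \<in> idx" and x: "0 < x" "x < 1"
    using face_coord unfolding f_def x_def by auto
  have bp: "0 \<in> breakpoints" "1 \<in> breakpoints" "d f \<in> breakpoints"
    using f by (auto simp: breakpoints_def idx_def)
  from back_orbit_step_coords[of n] show ?thesis
    unfolding f_def[symmetric] x_def[symmetric]
  proof (elim disjE conjE)
    assume "x < d f" "face n = nxt f" "coord n = fj_coord rho f x"
    then show ?thesis
      using f x d_less_one[OF f]
      by (intro has_gap_Suc_pullback[OF bp(1,3), of n "fj_coord rho f"] gap)
        (auto simp: x_def f_def orbit_coords_fj_image fj_coord_contracts fj_coord_strict_antimono)
  next
    assume "d f < x" "face n = nxt (nxt f)" "coord n = fk_coord rho f x"
    then show ?thesis
      using f x d_pos[OF f]
      by (intro has_gap_Suc_pullback[OF bp(3,2), of n "fk_coord rho f"] gap)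
        (auto simp: x_def f_def orbit_coords_fk_image fk_coord_contracts fk_coord_strict_antimono)
  qed
qed

lemma no_gap: "\<not> has_gap m l"
proof
  assume "has_gap m l"
  then have gaps: "\<exists>l. has_gap (m + k) l" for k
    using has_gap_Suc at_breakpoint_has_gap by (induction k) auto
  obtain B where B: "\<And>n. at_breakpoint n \<Longrightarrow> n < B"
    using finite_at_breakpoint by (auto simp: finite_nat_set_iff_bounded)
  define N where "N = m + B"
  obtain lN where "has_gap N lN"
    using gaps unfolding N_def by blast
  then have grow: "has_gap (N + k) (lN / contraction ^ k)" for k
  proof (induction k)
    case (Suc k)
    have "\<not> at_breakpoint (Suc (N + k))"
      using B[of "Suc (N + k)"] by (auto simp: N_def)
    then show ?case
      using has_gap_Suc[OF Suc.IH[OF Suc.prems]] by (simp add: field_simps)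
  qed simp
  have "0 < lN"
    using \<open>has_gap N lN\<close> by (simp add: has_gap_def)
  then obtain k where "contraction ^ k < lN"
    using real_arch_pow_inv contraction_pos contraction_less_one by blast
  then have "1 < lN / contraction ^ k"
    using contraction_pos by simp
  then show False
    using has_gap_le_one[OF grow[of k]] by simp
qed

lemma orbit_coords_dense:
  assumes "0 < e"
  shows "\<exists>t. face t = face m \<and> coord m < coord t \<and> coord t < coord m + e"
    and "\<exists>t. face t = face m \<and> coord m - e < coord t \<and> coord t < coord m"
proof -
  let ?l = "min e (min (coord m) (1 - coord m))"
  have l: "0 < ?l" "?l \<le> e" "?l \<le> coord m" "?l \<le> 1 - coord m"
    using assms coord_pos[of m] coord_less_one[of m] by auto
  show "\<exists>t. face t = face m \<and> coord m < coord t \<and> coord t < coord m + e"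
  proof (rule ccontr)
    assume "\<not> ?thesis"
    then have "right_gap m (coord m + ?l)"
      using l unfolding right_gap_def orbit_coords_def by fastforce
    then show False
      using no_gap[of m ?l] l unfolding has_gap_def by simp
  qed
  show "\<exists>t. face t = face m \<and> coord m - e < coord t \<and> coord t < coord m"
  proof (rule ccontr)
    assume "\<not> ?thesis"
    then have "left_gap m (coord m - ?l)"
      using l unfolding left_gap_def orbit_coords_def by fastforce
    then show False
      using no_gap[of m ?l] l unfolding has_gap_def by simp
  qed
qed

lemma back_orbit_in_P1_Aface:
  "back_orbit t \<in> P1 rho d \<inter> Aface (face t)" "piF (face t) (back_orbit t) = coord t"
  using P1_eq_range back_orbit_in_Aface_iff[OF face_in_idx] by (auto simp: coord_def)

theorem P1_limits:
  assumes "u \<in> P1 rho d" "i \<in> idx" "u \<in> Aface i"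
  shows "R_limit (P1 rho d) i u \<and> L_limit (P1 rho d) i u"
proof -
  obtain m where u: "u = back_orbit m"
    using assms(1) P1_eq_range by auto
  then have i: "i = face m"
    using back_orbit_in_Aface_iff assms(2,3) by blast
  have "R_limit (P1 rho d) i u"
    using assms(3) orbit_coords_dense(1)[of _ m] back_orbit_in_P1_Aface u i
    by (intro R_limitI) metis+
  moreover have "L_limit (P1 rho d) i u"
    using assms(3) orbit_coords_dense(2)[of _ m] back_orbit_in_P1_Aface u i
    by (intro L_limitI) metis+
  ultimately show ?thesis
    by blast
qed

end

theorem lemma5p4:
  fixes rho d :: "nat \<Rightarrow> real"
  assumes rho_range: "\<forall>i\<in>idx. 0 < rho i \<and> rho i < 1"
    and rho_sum: "rho 1 + rho 2 + rho 3 > 1"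
    and rho_pair: "\<forall>i\<in>idx. \<forall>j\<in>idx. i \<noteq> j \<longrightarrow> rho i + rho j \<le> 1"
    and d_range: "\<forall>i\<in>idx. 0 < d i \<and> d i < 1"
    and inf1: "infinite {z. preimage rho d z (dpt d 1)}"
    and fin2: "finite {z. preimage rho d z (dpt d 2)}"
    and fin3: "finite {z. preimage rho d z (dpt d 3)}"
  shows "\<forall>u\<in>P1 rho d. \<forall>i\<in>idx. u \<in> Aface i \<longrightarrow>
           R_limit (P1 rho d) i u \<and> L_limit (P1 rho d) i u"
proof -
  interpret standing_assumptions rho d
    using assms by unfold_locales auto
  show ?thesis
    using P1_limits by blast
qed

end
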